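(* Let $(\Delta,U,\mu_\Delta)$ be an expanding Young tower with $\mu_\Delta(\Delta_n)=O(\rho^n)$ for some $\rho<1$, and let $\tau<1$. There exist $C>0$ and $\theta<1$ such that for all $n\in\mathbb N$, $$\int_{U^{-n}\Delta_0}\tau^{\Psi_n}\,d\mu_\Delta\le C\theta^n.$$
   Context: Expanding Young tower: probability space $(\Delta,\mu_\Delta)$, measure-preserving $U$, partition $\{\Delta_{k,p}\}_{0\le k<r_p}$ with $U:\Delta_{k,p}\to\Delta_{k+1,p}$ and $U:\Delta_{r_p-1,p}\to\Delta_0=\bigcup_m\Delta_{0,m}$ measurable isomorphisms, and bounded distortion $|1-J(x)/J(y)|\le C\beta^{s(Ux,Uy)}$ for the inverse Jacobian $J$ of $U$ and $x,y$ in a common partition element ($s$ the separation time counted in returns to the basis). $\Delta_n=\bigcup_p\Delta_{n,p}$. $\Psi_n(x)=\#\{1\le k\le n: U^kx\in\Delta_0\}$ is the number of returns to the basis between times $1$ and $n$. *)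

theory Defs
  imports "HOL-Probability.Probability" "HOL-Library.Landau_Symbols"
begin

text \<open>Tower partition: index set P of columns, heights r p \<ge> 1, pieces D k p
  (level k of column p) for k < r p.\<close>

definition valid_piece :: "nat set \<Rightarrow> (nat \<Rightarrow> nat) \<Rightarrow> nat \<Rightarrow> nat \<Rightarrow> bool" where
  "valid_piece P r k p \<longleftrightarrow> p \<in> P \<and> k < r p"

definition tower_level :: "nat set \<Rightarrow> (nat \<Rightarrow> nat) \<Rightarrow> (nat \<Rightarrow> nat \<Rightarrow> 'a set) \<Rightarrow> nat \<Rightarrow> 'a set" where
  "tower_level P r D n = (\<Union>p\<in>{p\<in>P. n < r p}. D n p)"

definition same_piece :: "nat set \<Rightarrow> (nat \<Rightarrow> nat) \<Rightarrow> (nat \<Rightarrow> nat \<Rightarrow> 'a set) \<Rightarrow> 'a \<Rightarrow> 'a \<Rightarrow> bool" where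
  "same_piece P r D x y \<longleftrightarrow> (\<exists>k p. valid_piece P r k p \<and> x \<in> D k p \<and> y \<in> D k p)"

definition visits_before :: "('a \<Rightarrow> 'a) \<Rightarrow> 'a set \<Rightarrow> 'a \<Rightarrow> nat \<Rightarrow> nat" where
  "visits_before U B x j = card {i. i < j \<and> (U ^^ i) x \<in> B}"

text \<open>Separation time counted in returns to the base: s(x,y) is the number of visits of
  x to the base strictly before the first time the orbits of x and y lie in different
  partition elements (infinity if they never separate).\<close>
definition sep_time :: "nat set \<Rightarrow> (nat \<Rightarrow> nat) \<Rightarrow> (nat \<Rightarrow> nat \<Rightarrow> 'a set) \<Rightarrow> ('a \<Rightarrow> 'a) \<Rightarrow> 'a \<Rightarrow> 'a \<Rightarrow> enat" where
  "sep_time P r D U x y = Sup {enat n | n. \<forall>j. visits_before U (tower_level P r D 0) x j < n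
        \<longrightarrow> same_piece P r D ((U ^^ j) x) ((U ^^ j) y)}"

definition meas_iso_on :: "'a measure \<Rightarrow> ('a \<Rightarrow> 'a) \<Rightarrow> 'a set \<Rightarrow> 'a set \<Rightarrow> bool" where
  "meas_iso_on M U A B \<longleftrightarrow> bij_betw U A B \<and>
     (\<forall>S. S \<subseteq> A \<longrightarrow> (S \<in> sets M \<longleftrightarrow> U ` S \<in> sets M))"

definition expanding_young_tower ::
  "'a measure \<Rightarrow> ('a \<Rightarrow> 'a) \<Rightarrow> nat set \<Rightarrow> (nat \<Rightarrow> nat) \<Rightarrow> (nat \<Rightarrow> nat \<Rightarrow> 'a set)
    \<Rightarrow> ('a \<Rightarrow> real) \<Rightarrow> real \<Rightarrow> real \<Rightarrow> bool" where
  "expanding_young_tower M U P r D J Cd \<beta> \<longleftrightarrow>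
     prob_space M \<and> U \<in> M \<rightarrow>\<^sub>M M \<and> distr M M U = M \<and>
     countable P \<and> (\<forall>p\<in>P. 1 \<le> r p) \<and>
     (\<forall>k p. valid_piece P r k p \<longrightarrow> D k p \<in> sets M) \<and>
     (\<forall>k p k' p'. valid_piece P r k p \<and> valid_piece P r k' p' \<and> (k, p) \<noteq> (k', p')
        \<longrightarrow> D k p \<inter> D k' p' = {}) \<and>
     (\<Union>(k, p)\<in>{(k, p). valid_piece P r k p}. D k p) = space M \<and>
     (\<forall>k p. valid_piece P r (Suc k) p \<longrightarrow> meas_iso_on M U (D k p) (D (Suc k) p)) \<and>
     (\<forall>p\<in>P. meas_iso_on M U (D (r p - 1) p) (tower_level P r D 0)) \<and>
     J \<in> borel_measurable M \<and> (\<forall>x\<in>space M. 0 < J x) \<and>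
     (\<forall>k p A. valid_piece P r k p \<and> A \<subseteq> D k p \<and> A \<in> sets M \<longrightarrow>
        emeasure M (U ` A) = (\<integral>\<^sup>+ x\<in>A. ennreal (1 / J x) \<partial>M)) \<and>
     0 < \<beta> \<and> \<beta> < 1 \<and>
     (\<forall>k p x y. valid_piece P r k p \<and> x \<in> D k p \<and> y \<in> D k p \<longrightarrow>
        (\<forall>n. enat n \<le> sep_time P r D U (U x) (U y) \<longrightarrow> \<bar>1 - J x / J y\<bar> \<le> Cd * \<beta> ^ n))"

definition Psi :: "('a \<Rightarrow> 'a) \<Rightarrow> 'a set \<Rightarrow> nat \<Rightarrow> 'a \<Rightarrow> nat" where
  "Psi U B n x = card {k \<in> {1..n}. (U ^^ k) x \<in> B}"

end

theory Submission
  imports Defs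
begin

text \<open>Give every return to the base \<open>\<Delta>\<^sub>0\<close> the weight \<open>\<sigma>\<close> and let \<open>W\<^sub>\<sigma>(n, B)\<close> be
  the integral of \<open>\<sigma> ^ \<Psi>\<^sub>n\<close> over \<open>U\<^sup>-\<^sup>n B\<close>, for \<open>B \<subseteq> \<Delta>\<^sub>0\<close>. Cutting every orbit
  at its last return before time \<open>n + 1\<close> gives the renewal inequality
  \<open>W\<^sub>\<sigma>(n + 1, B) \<le> \<sigma> \<Sum>\<^bsub>i \<le> n\<^esub> W\<^sub>\<sigma>(n - i, R\<^sub>i B) + \<sigma> \<mu>(orbits still climbing)\<close>,
  where \<open>R\<^sub>i B\<close> is the set of base points whose first return, after \<open>i + 1\<close> steps, lands
  in \<open>B\<close>. As \<open>U\<close> maps each top piece onto \<open>\<Delta>\<^sub>0\<close> with bounded distortion,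
  \<open>\<mu>(R\<^sub>i B) = O(\<mu>(B) \<mu>(\<Delta>\<^sub>i))\<close>, so the exponential tail lets induction give
  \<open>W\<^sub>\<sigma>(n, B) \<le> a ^ n \<mu>(B)\<close> with \<open>a < 1\<close> once \<open>\<sigma>\<close> is small. A general
  \<open>\<tau> = \<theta> ^ m\<close> is reduced to \<open>\<sigma> = L ^ -m\<close> through \<open>\<tau> ^ k \<le> \<theta> ^ n + L ^ n \<sigma> ^ k\<close>:
  either the number \<open>k\<close> of returns is at least \<open>n / m\<close>, or \<open>L ^ n\<close> outweighs \<open>\<sigma> ^ k\<close>.\<close>

lemma power_Psi_eq_prod:
  fixes \<sigma> :: "'b::comm_monoid_mult"
  shows "\<sigma> ^ Psi U B n x = (\<Prod>k\<in>{1..n}. if (U ^^ k) x \<in> B then \<sigma> else 1)"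
  by (simp add: Psi_def prod.inter_filter[symmetric])

lemma Suc_Psi_le_Psi:
  assumes "m < n" "(U ^^ n) x \<in> B"
  shows "Suc (Psi U B m x) \<le> Psi U B n x"
proof -
  have "insert n {k \<in> {1..m}. (U ^^ k) x \<in> B} \<subseteq> {k \<in> {1..n}. (U ^^ k) x \<in> B}"
    using assms by auto
  then have "card (insert n {k \<in> {1..m}. (U ^^ k) x \<in> B}) \<le> Psi U B n x"
    unfolding Psi_def by (intro card_mono) auto
  then show ?thesis
    using assms(1) by (simp add: Psi_def)
qed

lemma bigo_power_imp_le:
  fixes f :: "nat \<Rightarrow> real"
  assumes "f \<in> O(\<lambda>n. \<rho> ^ n)" "0 < \<rho>"
  shows "\<exists>C. \<forall>n. f n \<le> C * \<rho> ^ n"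
proof -
  obtain c N where "0 < c" and c: "\<And>n. N \<le> n \<Longrightarrow> norm (f n) \<le> c * norm (\<rho> ^ n)"
    using assms(1) by (elim landau_o.bigE) (auto simp: eventually_sequentially)
  define C where "C = c + (\<Sum>k<N. \<bar>f k\<bar> / \<rho> ^ k)"
  have "f n \<le> C * \<rho> ^ n" for n
  proof (cases "N \<le> n")
    case True
    have "f n \<le> c * \<rho> ^ n"
      using c[OF True] assms(2) by simp
    also have "\<dots> \<le> C * \<rho> ^ n"
      unfolding C_def using assms(2) by (intro mult_right_mono) (auto intro: sum_nonneg)
    finally show ?thesis .
  next
    case False
    have "\<bar>f n\<bar> / \<rho> ^ n \<le> (\<Sum>k<N. \<bar>f k\<bar> / \<rho> ^ k)"
      using False assms(2) by (intro member_le_sum[where f = "\<lambda>k. \<bar>f k\<bar> / \<rho> ^ k"]) auto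
    then have "\<bar>f n\<bar> / \<rho> ^ n \<le> C"
      unfolding C_def using \<open>0 < c\<close> by linarith
    then show ?thesis
      using assms(2) by (simp add: divide_le_eq)
  qed
  then show ?thesis by blast
qed

lemma sum_power_convolution_le:
  fixes a \<rho> :: real
  assumes "0 \<le> \<rho>" "\<rho> < a"
  shows "(\<Sum>i\<le>n. a ^ (n - i) * \<rho> ^ i) \<le> a ^ Suc n / (a - \<rho>)"
proof -
  have "\<rho> ^ Suc n - a ^ Suc n = (\<rho> - a) * (\<Sum>i\<le>n. a ^ (n - i) * \<rho> ^ i)"
    using power_diff_sumr2[of \<rho> "Suc n" a] by (simp add: lessThan_Suc_atMost)
  then have "(\<Sum>i\<le>n. a ^ (n - i) * \<rho> ^ i) = (a ^ Suc n - \<rho> ^ Suc n) / (a - \<rho>)"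
    using assms by (simp add: field_simps)
  also have "\<dots> \<le> a ^ Suc n / (a - \<rho>)"
    using assms by (intro divide_right_mono) auto
  finally show ?thesis .
qed

lemma power_le_threshold_split:
  fixes \<theta> L :: real
  assumes "0 \<le> \<theta>" "\<theta> \<le> 1" "1 \<le> L"
  shows "\<theta> ^ (m * k) \<le> \<theta> ^ n + L ^ n * (1 / L) ^ (m * k)"
proof (cases "n \<le> m * k")
  case True
  then have "\<theta> ^ (m * k) \<le> \<theta> ^ n"
    using assms by (intro power_decreasing) auto
  then show ?thesis
    using assms by (simp add: add_increasing2)
next
  case False
  then have "L ^ n = L ^ (n - m * k) * L ^ (m * k)"
    by (simp flip: power_add)
  then have "L ^ n * (1 / L) ^ (m * k) = L ^ (n - m * k)"
    using assms by (simp add: power_one_over)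
  moreover have "\<theta> ^ (m * k) \<le> 1" "1 \<le> L ^ (n - m * k)"
    using assms by (simp_all add: power_le_one one_le_power)
  ultimately show ?thesis
    using zero_le_power[OF assms(1), of n] by linarith
qed

lemma (in finite_measure) const_mult_measure_le_nn_set_integral:
  assumes "A \<in> sets M" "0 \<le> k" "\<And>x. x \<in> A \<Longrightarrow> k \<le> f x"
  shows "ennreal (k * measure M A) \<le> (\<integral>\<^sup>+x\<in>A. ennreal (f x) \<partial>M)"
proof -
  have "ennreal (k * measure M A) = (\<integral>\<^sup>+x\<in>A. ennreal k \<partial>M)"
    using assms(1,2) by (simp add: nn_integral_cmult_indicator emeasure_eq_measure ennreal_mult)
  also have "\<dots> \<le> (\<integral>\<^sup>+x\<in>A. ennreal (f x) \<partial>M)"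
    using assms(3) by (intro nn_integral_mono) (auto intro: ennreal_leI split: split_indicator)
  finally show ?thesis .
qed

lemma (in finite_measure) nn_set_integral_le_const_mult_measure:
  assumes "A \<in> sets M" "0 \<le> k" "\<And>x. x \<in> A \<Longrightarrow> f x \<le> k"
  shows "(\<integral>\<^sup>+x\<in>A. ennreal (f x) \<partial>M) \<le> ennreal (k * measure M A)"
proof -
  have "(\<integral>\<^sup>+x\<in>A. ennreal (f x) \<partial>M) \<le> (\<integral>\<^sup>+x\<in>A. ennreal k \<partial>M)"
    using assms(3) by (intro nn_integral_mono) (auto intro: ennreal_leI split: split_indicator)
  also have "\<dots> = ennreal (k * measure M A)"
    using assms(1,2) by (simp add: nn_integral_cmult_indicator emeasure_eq_measure ennreal_mult)
  finally show ?thesis .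
qed

text \<open>Comparing \<open>1 / J\<close> with its value at a single point \<open>y \<in> T\<close> bounds \<open>\<mu>(V A)\<close> from
  below and \<open>\<mu>(V T)\<close> from above.\<close>
lemma measure_mult_image_le_distortion:
  fixes M :: "'a measure" and V :: "'a \<Rightarrow> 'b" and J :: "'a \<Rightarrow> real"
  assumes "finite_measure M" "finite_measure N" "A \<subseteq> T" "A \<in> sets M" "T \<in> sets M"
    and jacobian: "\<And>S. S \<subseteq> T \<Longrightarrow> S \<in> sets M \<Longrightarrow>
      emeasure N (V ` S) = (\<integral>\<^sup>+x\<in>S. ennreal (1 / J x) \<partial>M)"
    and J_pos: "\<And>x. x \<in> T \<Longrightarrow> 0 < J x"
    and ratio: "\<And>x y. x \<in> T \<Longrightarrow> y \<in> T \<Longrightarrow> J x \<le> c * J y"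
  shows "measure M A * measure N (V ` T) \<le> c\<^sup>2 * measure N (V ` A) * measure M T"
proof (cases "T = {}")
  case True
  then show ?thesis
    using \<open>A \<subseteq> T\<close> by simp
next
  case False
  then obtain y where y: "y \<in> T" by blast
  interpret M: finite_measure M by fact
  interpret N: finite_measure N by fact
  have "0 < J y"
    using J_pos y .
  have "0 < c"
    using ratio[OF y y] \<open>0 < J y\<close> by (simp add: zero_less_mult_iff)
  have "ennreal (1 / (c * J y) * measure M A) \<le> (\<integral>\<^sup>+x\<in>A. ennreal (1 / J x) \<partial>M)"
    using \<open>A \<subseteq> T\<close> J_pos ratio[OF _ y] \<open>0 < c\<close> \<open>0 < J y\<close>
    by (intro M.const_mult_measure_le_nn_set_integral \<open>A \<in> sets M\<close> divide_left_mono) auto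
  then have "ennreal (1 / (c * J y) * measure M A) \<le> ennreal (measure N (V ` A))"
    by (simp only: jacobian[OF \<open>A \<subseteq> T\<close> \<open>A \<in> sets M\<close>, symmetric] N.emeasure_eq_measure)
  then have lower: "measure M A \<le> c * J y * measure N (V ` A)"
    using \<open>0 < c\<close> \<open>0 < J y\<close> by (simp add: field_simps)
  have "(\<integral>\<^sup>+x\<in>T. ennreal (1 / J x) \<partial>M) \<le> ennreal (c / J y * measure M T)"
    using J_pos ratio[OF y] \<open>0 < c\<close> \<open>0 < J y\<close>
    by (intro M.nn_set_integral_le_const_mult_measure \<open>T \<in> sets M\<close>) (auto simp: field_simps)
  then have "ennreal (measure N (V ` T)) \<le> ennreal (c / J y * measure M T)"
    by (simp only: jacobian[OF order_refl \<open>T \<in> sets M\<close>, symmetric] N.emeasure_eq_measure)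
  then have upper: "measure N (V ` T) \<le> c / J y * measure M T"
    using \<open>0 < c\<close> \<open>0 < J y\<close> by simp
  have "measure M A * measure N (V ` T) \<le> (c * J y * measure N (V ` A)) * (c / J y * measure M T)"
    using \<open>0 < c\<close> \<open>0 < J y\<close> by (intro mult_mono lower upper) auto
  also have "\<dots> = c\<^sup>2 * measure N (V ` A) * measure M T"
    using \<open>0 < J y\<close> by (simp add: power2_eq_square field_simps)
  finally show ?thesis .
qed

locale young_tower = prob_space M
  for M :: "'a measure" +
  fixes U :: "'a \<Rightarrow> 'a" and P :: "nat set" and r :: "nat \<Rightarrow> nat"
    and D :: "nat \<Rightarrow> nat \<Rightarrow> 'a set" and J :: "'a \<Rightarrow> real" and Cd :: real
  assumes U_measurable [measurable]: "U \<in> M \<rightarrow>\<^sub>M M"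
    and distr_U: "distr M M U = M"
    and countable_P: "countable P"
    and height_pos: "p \<in> P \<Longrightarrow> 0 < r p"
    and sets_piece: "valid_piece P r k p \<Longrightarrow> D k p \<in> sets M"
    and disjoint_pieces: "valid_piece P r k p \<Longrightarrow> valid_piece P r k' p' \<Longrightarrow> (k, p) \<noteq> (k', p')
      \<Longrightarrow> D k p \<inter> D k' p' = {}"
    and pieces_cover: "(\<Union>(k, p)\<in>{(k, p). valid_piece P r k p}. D k p) = space M"
    and image_piece_subset: "valid_piece P r (Suc k) p \<Longrightarrow> U ` D k p \<subseteq> D (Suc k) p"
    and image_top: "p \<in> P \<Longrightarrow> U ` D (r p - 1) p = tower_level P r D 0"
    and jacobian: "valid_piece P r k p \<Longrightarrow> A \<subseteq> D k p \<Longrightarrow> A \<in> sets M \<Longrightarrow>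
      emeasure M (U ` A) = (\<integral>\<^sup>+x\<in>A. ennreal (1 / J x) \<partial>M)"
    and J_pos: "x \<in> space M \<Longrightarrow> 0 < J x"
    and distortion: "valid_piece P r k p \<Longrightarrow> x \<in> D k p \<Longrightarrow> y \<in> D k p \<Longrightarrow>
      \<bar>1 - J x / J y\<bar> \<le> Cd"

lemma expanding_young_tower_imp_young_tower:
  assumes "expanding_young_tower M U P r D J Cd \<beta>"
  shows "young_tower M U P r D J Cd"
proof -
  note tower = assms[unfolded expanding_young_tower_def meas_iso_on_def bij_betw_def]
  have "\<bar>1 - J x / J y\<bar> \<le> Cd"
    if "valid_piece P r k p" "x \<in> D k p" "y \<in> D k p" for k p x y
  proof -
    have "\<forall>k p x y. valid_piece P r k p \<and> x \<in> D k p \<and> y \<in> D k p \<longrightarrow>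
        (\<forall>n. enat n \<le> sep_time P r D U (U x) (U y) \<longrightarrow> \<bar>1 - J x / J y\<bar> \<le> Cd * \<beta> ^ n)"
      using tower by (elim conjE) assumption
    moreover have "enat 0 \<le> sep_time P r D U (U x) (U y)"
      by (simp add: zero_enat_def[symmetric])
    ultimately show ?thesis
      using that by fastforce
  qed
  then show ?thesis
    using tower by (elim conjE) (intro young_tower.intro young_tower_axioms.intro; simp add: Suc_le_eq)
qed

context young_tower
begin

abbreviation base :: "'a set" where
  "base \<equiv> tower_level P r D 0"

definition tops :: "nat set \<Rightarrow> 'a set" where
  "tops Q = (\<Union>p\<in>Q. D (r p - 1) p)"

lemma valid_top: "p \<in> P \<Longrightarrow> valid_piece P r (r p - 1) p"
  using height_pos by (simp add: valid_piece_def)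

lemma piece_subset_space: "valid_piece P r k p \<Longrightarrow> D k p \<subseteq> space M"
  using pieces_cover by blast

lemma in_some_piece:
  assumes "x \<in> space M"
  obtains k p where "valid_piece P r k p" "x \<in> D k p"
  using assms pieces_cover by blast

lemma piece_unique:
  assumes "valid_piece P r k p" "valid_piece P r k' p'" "x \<in> D k p" "x \<in> D k' p'"
  shows "k' = k \<and> p' = p"
  using disjoint_pieces[OF assms(1,2)] assms(3,4) by blast

lemma not_in_base:
  assumes "valid_piece P r (Suc k) p" "x \<in> D (Suc k) p"
  shows "x \<notin> base"
proof
  assume "x \<in> base"
  then obtain p' where "valid_piece P r 0 p'" "x \<in> D 0 p'"
    unfolding tower_level_def valid_piece_def by blast
  then show False
    using piece_unique[OF assms(1)] assms(2) by blast
qed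

lemma sets_tower_level [measurable]: "tower_level P r D n \<in> sets M"
  unfolding tower_level_def
  by (intro sets.countable_UN' countable_subset[OF _ countable_P])
     (auto intro: sets_piece simp: valid_piece_def)

lemma sets_top_piece: "p \<in> P \<Longrightarrow> D (r p - 1) p \<in> sets M"
  using sets_piece[OF valid_top] .

lemma measurable_funpow [measurable]: "U ^^ n \<in> M \<rightarrow>\<^sub>M M"
  by (rule measurable_compose_n[OF U_measurable])

lemma funpow_in_space: "x \<in> space M \<Longrightarrow> (U ^^ n) x \<in> space M"
  using measurable_space[OF measurable_funpow] .

lemma distr_funpow: "distr M M (U ^^ n) = M"
proof (induction n)
  case 0
  show ?case by (simp add: id_def)
next
  case (Suc n)
  have "distr M M (U ^^ Suc n) = distr (distr M M U) M (U ^^ n)"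
    by (simp add: distr_distr comp_def funpow_swap1)
  also have "\<dots> = M"
    using Suc by (simp add: distr_U)
  finally show ?case .
qed

lemma measure_funpow_preimage: "S \<in> sets M \<Longrightarrow> measure M ((U ^^ n) -` S \<inter> space M) = measure M S"
  using measure_distr[OF measurable_funpow, of S n] by (simp add: distr_funpow)

lemma integral_indicator_funpow:
  "S \<in> sets M \<Longrightarrow> (\<integral>x. indicator S ((U ^^ n) x) \<partial>M) = measure M S"
  using integral_distr[OF measurable_funpow, of "indicator S :: 'a \<Rightarrow> real" n]
  by (simp add: distr_funpow)

lemma preimage_piece:
  assumes "valid_piece P r (Suc k) p"
  shows "U -` D (Suc k) p \<inter> space M = D k p"
proof
  have "valid_piece P r k p"
    using assms by (simp add: valid_piece_def)
  then show "D k p \<subseteq> U -` D (Suc k) p \<inter> space M"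
    using image_piece_subset[OF assms] piece_subset_space by blast
next
  show "U -` D (Suc k) p \<inter> space M \<subseteq> D k p"
  proof
    fix w assume w: "w \<in> U -` D (Suc k) p \<inter> space M"
    then obtain k' p' where kp': "valid_piece P r k' p'" "w \<in> D k' p'"
      by (blast elim: in_some_piece)
    show "w \<in> D k p"
    proof (cases "Suc k' < r p'")
      case True
      then have "valid_piece P r (Suc k') p'"
        using kp' by (simp add: valid_piece_def)
      then have "U w \<in> D (Suc k') p'"
        using image_piece_subset kp'(2) by blast
      then show ?thesis
        using piece_unique[OF assms \<open>valid_piece P r (Suc k') p'\<close>] w kp'(2) by auto
    next
      case False
      then have "k' = r p' - 1" "p' \<in> P"
        using kp' by (auto simp: valid_piece_def)
      then have "U w \<in> base"
        using image_top kp'(2) by blast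
      then show ?thesis
        using not_in_base[OF assms] w by blast
    qed
  qed
qed

lemma in_piece_if_funpow_in_piece:
  "w \<in> space M \<Longrightarrow> valid_piece P r (k + i) p \<Longrightarrow> (U ^^ i) w \<in> D (k + i) p \<Longrightarrow> w \<in> D k p"
proof (induction i arbitrary: w k)
  case 0
  then show ?case by simp
next
  case (Suc i)
  have "(U ^^ i) (U w) \<in> D (Suc k + i) p"
    using Suc.prems(3) by (simp add: funpow_swap1)
  then have "U w \<in> D (Suc k) p"
    using Suc.IH[of "U w" "Suc k"] Suc.prems measurable_space[OF U_measurable] by simp
  then show ?case
    using preimage_piece[of k p] Suc.prems by (auto simp: valid_piece_def)
qed

lemma top_if_image_in_base:
  assumes "y \<in> space M" "U y \<in> base"
  obtains p where "p \<in> P" "y \<in> D (r p - 1) p"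
proof -
  obtain k p where kp: "valid_piece P r k p" "y \<in> D k p"
    using assms(1) by (rule in_some_piece)
  have "\<not> Suc k < r p"
  proof
    assume "Suc k < r p"
    then have "valid_piece P r (Suc k) p"
      using kp by (simp add: valid_piece_def)
    then show False
      using not_in_base image_piece_subset kp(2) assms(2) by blast
  qed
  then have "k = r p - 1" "p \<in> P"
    using kp by (auto simp: valid_piece_def)
  then show ?thesis
    using that kp(2) by blast
qed

lemma J_le:
  assumes "valid_piece P r k p" "x \<in> D k p" "y \<in> D k p"
  shows "J x \<le> (1 + Cd) * J y"
proof -
  have "0 < J y"
    using J_pos piece_subset_space[OF assms(1)] assms(3) by blast
  moreover have "J x / J y \<le> 1 + Cd"
    using distortion[OF assms] by (simp add: abs_le_iff)
  ultimately show ?thesis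
    by (simp add: divide_le_eq)
qed

lemma measure_piece: "valid_piece P r k p \<Longrightarrow> measure M (D k p) = measure M (D 0 p)"
proof (induction k)
  case 0
  show ?case by simp
next
  case (Suc k)
  have "measure M (D (Suc k) p) = measure M (U -` D (Suc k) p \<inter> space M)"
    using measure_distr[OF U_measurable sets_piece[OF Suc.prems]] by (simp add: distr_U)
  also have "\<dots> = measure M (D k p)"
    by (simp add: preimage_piece[OF Suc.prems])
  also have "\<dots> = measure M (D 0 p)"
    using Suc by (simp add: valid_piece_def)
  finally show ?case .
qed

lemma emeasure_UN_columns:
  assumes "Q \<subseteq> P" "\<And>p. p \<in> Q \<Longrightarrow> valid_piece P r (k p) p"
    and "\<And>p. p \<in> Q \<Longrightarrow> X p \<subseteq> D (k p) p" "\<And>p. p \<in> Q \<Longrightarrow> X p \<in> sets M"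
  shows "emeasure M (\<Union>p\<in>Q. X p) = (\<integral>\<^sup>+p. emeasure M (X p) \<partial>count_space Q)"
proof (rule emeasure_UN_countable)
  show "countable Q"
    using countable_subset[OF assms(1) countable_P] .
  show "disjoint_family_on X Q"
    unfolding disjoint_family_on_def
  proof (intro ballI impI)
    fix p q assume "p \<in> Q" "q \<in> Q" "p \<noteq> q"
    then have "D (k p) p \<inter> D (k q) q = {}"
      using assms(2) by (intro disjoint_pieces) auto
    then show "X p \<inter> X q = {}"
      using assms(3) \<open>p \<in> Q\<close> \<open>q \<in> Q\<close> by blast
  qed
qed (use assms(4) in auto)

lemma emeasure_tops:
  assumes "Q \<subseteq> P"
  shows "emeasure M (tops Q) = (\<integral>\<^sup>+p. emeasure M (D (r p - 1) p) \<partial>count_space Q)"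
  unfolding tops_def using assms valid_top sets_top_piece
  by (intro emeasure_UN_columns[where k = "\<lambda>p. r p - 1"]) blast+

lemma sets_top_Int_preimage:
  assumes "p \<in> P" "B \<in> sets M"
  shows "D (r p - 1) p \<inter> U -` B \<in> sets M"
proof -
  have "D (r p - 1) p \<inter> U -` B = D (r p - 1) p \<inter> (U -` B \<inter> space M)"
    using piece_subset_space[OF valid_top[OF assms(1)]] by blast
  then show ?thesis
    using sets_top_piece[OF assms(1)] measurable_sets[OF U_measurable assms(2)] by auto
qed

lemma tops_Int_preimage_eq: "tops Q \<inter> U -` B = (\<Union>p\<in>Q. D (r p - 1) p \<inter> U -` B)"
  unfolding tops_def by blast

lemma sets_tops_Int_preimage: "Q \<subseteq> P \<Longrightarrow> B \<in> sets M \<Longrightarrow> tops Q \<inter> U -` B \<in> sets M"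
  unfolding tops_Int_preimage_eq using sets_top_Int_preimage
  by (intro sets.countable_UN' countable_subset[OF _ countable_P]) blast+

lemma emeasure_tops_Int_preimage:
  assumes "Q \<subseteq> P" "B \<in> sets M"
  shows "emeasure M (tops Q \<inter> U -` B) = (\<integral>\<^sup>+p. emeasure M (D (r p - 1) p \<inter> U -` B) \<partial>count_space Q)"
  unfolding tops_Int_preimage_eq using assms valid_top sets_top_Int_preimage
  by (intro emeasure_UN_columns[where k = "\<lambda>p. r p - 1"]) blast+

lemma measure_tops_tail: "measure M (tops {p \<in> P. n < r p}) = measure M (tower_level P r D n)"
proof -
  let ?Q = "{p \<in> P. n < r p}"
  have "emeasure M (tops ?Q) = (\<integral>\<^sup>+p. emeasure M (D (r p - 1) p) \<partial>count_space ?Q)"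
    by (rule emeasure_tops) blast
  also have "\<dots> = (\<integral>\<^sup>+p. emeasure M (D n p) \<partial>count_space ?Q)"
  proof (rule nn_integral_cong)
    fix p assume "p \<in> space (count_space ?Q)"
    then have "valid_piece P r n p" "valid_piece P r (r p - 1) p"
      by (auto simp: valid_piece_def)
    then show "emeasure M (D (r p - 1) p) = emeasure M (D n p)"
      by (simp add: emeasure_eq_measure measure_piece)
  qed
  also have "\<dots> = emeasure M (tower_level P r D n)"
    unfolding tower_level_def
    by (rule emeasure_UN_columns[where k = "\<lambda>_. n", symmetric]) (auto simp: valid_piece_def sets_piece)
  finally show ?thesis
    by (simp add: emeasure_eq_measure)
qed

text \<open>The distortion bound applied to a top piece, which \<open>U\<close> maps onto the whole base.\<close>
lemma measure_top_Int_preimage_le: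
  assumes "p \<in> P" "B \<in> sets M" "B \<subseteq> base"
  shows "measure M (D (r p - 1) p \<inter> U -` B) * measure M base
    \<le> (1 + Cd)\<^sup>2 * measure M B * measure M (D (r p - 1) p)"
proof -
  let ?T = "D (r p - 1) p"
  have top_valid: "valid_piece P r (r p - 1) p"
    using valid_top[OF assms(1)] .
  have image_eq: "U ` (?T \<inter> U -` B) = B"
  proof
    show "B \<subseteq> U ` (?T \<inter> U -` B)"
    proof
      fix b assume "b \<in> B"
      then obtain t where "t \<in> ?T" "b = U t"
        using image_top[OF assms(1)] assms(3) by auto
      then show "b \<in> U ` (?T \<inter> U -` B)"
        using \<open>b \<in> B\<close> by auto
    qed
  qed auto
  have "measure M (?T \<inter> U -` B) * measure M (U ` ?T)
      \<le> (1 + Cd)\<^sup>2 * measure M (U ` (?T \<inter> U -` B)) * measure M ?T"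
  proof (rule measure_mult_image_le_distortion)
    show "?T \<inter> U -` B \<subseteq> ?T"
      by auto
    show "?T \<inter> U -` B \<in> sets M"
      using sets_top_Int_preimage[OF assms(1,2)] .
    show "?T \<in> sets M"
      using sets_piece[OF top_valid] .
    show "emeasure M (U ` S) = (\<integral>\<^sup>+x\<in>S. ennreal (1 / J x) \<partial>M)"
      if "S \<subseteq> ?T" "S \<in> sets M" for S
      using jacobian[OF top_valid that] .
    show "0 < J x" if "x \<in> ?T" for x
      using J_pos piece_subset_space[OF top_valid] that by auto
    show "J x \<le> (1 + Cd) * J y" if "x \<in> ?T" "y \<in> ?T" for x y
      using J_le[OF top_valid that] .
  qed (fact finite_measure_axioms)+
  then show ?thesis
    using image_top[OF assms(1)] image_eq by simp
qed

lemma measure_tops_Int_preimage_le: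
  assumes "Q \<subseteq> P" "B \<in> sets M" "B \<subseteq> base" "0 < measure M base"
  shows "measure M (tops Q \<inter> U -` B) \<le> (1 + Cd)\<^sup>2 / measure M base * measure M B * measure M (tops Q)"
proof -
  define K where "K = (1 + Cd)\<^sup>2 / measure M base * measure M B"
  have "0 \<le> K"
    using assms(4) by (simp add: K_def)
  have "emeasure M (tops Q \<inter> U -` B)
      = (\<integral>\<^sup>+p. emeasure M (D (r p - 1) p \<inter> U -` B) \<partial>count_space Q)"
    using emeasure_tops_Int_preimage[OF assms(1,2)] .
  also have "\<dots> \<le> (\<integral>\<^sup>+p. ennreal K * emeasure M (D (r p - 1) p) \<partial>count_space Q)"
  proof (rule nn_integral_mono)
    fix p assume "p \<in> space (count_space Q)"
    then have "measure M (D (r p - 1) p \<inter> U -` B) * measure M base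
        \<le> (1 + Cd)\<^sup>2 * measure M B * measure M (D (r p - 1) p)"
      using measure_top_Int_preimage_le assms by auto
    then have "measure M (D (r p - 1) p \<inter> U -` B) \<le> K * measure M (D (r p - 1) p)"
      using assms(4) by (simp add: K_def le_divide_eq)
    then show "emeasure M (D (r p - 1) p \<inter> U -` B) \<le> ennreal K * emeasure M (D (r p - 1) p)"
      using \<open>0 \<le> K\<close> by (simp add: emeasure_eq_measure ennreal_mult''[symmetric])
  qed
  also have "\<dots> = ennreal K * emeasure M (tops Q)"
    using emeasure_tops[OF assms(1)] by (simp add: nn_integral_cmult)
  finally show ?thesis
    using \<open>0 \<le> K\<close> by (simp add: emeasure_eq_measure ennreal_mult''[symmetric] K_def)
qed

text \<open>Points of the base whose first return to the base happens at time \<open>Suc i\<close> and lands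
  in \<open>B\<close>.\<close>
definition return_into :: "nat \<Rightarrow> 'a set \<Rightarrow> 'a set" where
  "return_into i B = base \<inter> (U ^^ i) -` (tops {p \<in> P. r p = Suc i} \<inter> U -` B) \<inter> space M"

lemma return_into_subset_base: "return_into i B \<subseteq> base"
  unfolding return_into_def Int_assoc by (rule Int_lower1)

lemma sets_return_into: "B \<in> sets M \<Longrightarrow> return_into i B \<in> sets M"
  unfolding return_into_def Int_assoc
  by (intro sets.Int sets_tower_level measurable_sets[OF measurable_funpow] sets_tops_Int_preimage) auto

lemma tops_height_subset: "tops {p \<in> P. r p = Suc i} \<subseteq> tower_level P r D i"
  unfolding tops_def tower_level_def by (intro UN_mono) auto

lemma measure_return_into_le:
  assumes "B \<in> sets M" "B \<subseteq> base" "0 < measure M base"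
  shows "measure M (return_into i B)
    \<le> (1 + Cd)\<^sup>2 / measure M base * measure M B * measure M (tower_level P r D i)"
proof -
  let ?Q = "{p \<in> P. r p = Suc i}"
  let ?X = "tops ?Q \<inter> U -` B"
  have "?X \<in> sets M"
    by (rule sets_tops_Int_preimage[OF _ assms(1)]) auto
  have "return_into i B \<subseteq> (U ^^ i) -` ?X \<inter> space M"
    unfolding return_into_def Int_assoc by (rule Int_lower2)
  then have "measure M (return_into i B) \<le> measure M ((U ^^ i) -` ?X \<inter> space M)"
    using measurable_sets[OF measurable_funpow \<open>?X \<in> sets M\<close>] by (rule finite_measure_mono)
  also have "\<dots> = measure M ?X"
    using measure_funpow_preimage[OF \<open>?X \<in> sets M\<close>] .
  also have "\<dots> \<le> (1 + Cd)\<^sup>2 / measure M base * measure M B * measure M (tops ?Q)"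
    using assms by (intro measure_tops_Int_preimage_le) auto
  also have "\<dots> \<le> (1 + Cd)\<^sup>2 / measure M base * measure M B * measure M (tower_level P r D i)"
    using assms(3) tops_height_subset by (intro mult_left_mono finite_measure_mono) auto
  finally show ?thesis .
qed

definition return_integral :: "real \<Rightarrow> nat \<Rightarrow> 'a set \<Rightarrow> real" where
  "return_integral \<sigma> n B = (\<integral>x. indicator B ((U ^^ n) x) * \<sigma> ^ Psi U base n x \<partial>M)"

lemma set_integral_eq_return_integral:
  "set_lebesgue_integral M ((U ^^ n) -` base \<inter> space M) (\<lambda>x. \<sigma> ^ Psi U base n x)
    = return_integral \<sigma> n base"
  unfolding set_lebesgue_integral_def return_integral_def
  by (intro Bochner_Integration.integral_cong) (auto simp: indicator_def)

lemma borel_measurable_power_Psi [measurable]: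
  "(\<lambda>x. (\<sigma> :: real) ^ Psi U base n x) \<in> borel_measurable M"
  unfolding power_Psi_eq_prod by measurable

lemma integrable_indicator_funpow:
  "S \<in> sets M \<Longrightarrow> integrable M (\<lambda>x. indicator S ((U ^^ n) x) :: real)"
  by (rule integrable_const_bound[where B = 1]) (auto simp: indicator_def)

lemma integrable_return:
  fixes \<sigma> :: real
  assumes "B \<in> sets M" "0 \<le> \<sigma>" "\<sigma> \<le> 1"
  shows "integrable M (\<lambda>x. indicator B ((U ^^ n) x) * \<sigma> ^ Psi U base n x)"
  by (rule integrable_const_bound[where B = 1]) (use assms in \<open>auto simp: indicator_def power_le_one\<close>)

lemma return_integral_0: "B \<in> sets M \<Longrightarrow> return_integral \<sigma> 0 B = measure M B"
  using integral_indicator_funpow[of B 0] by (simp add: return_integral_def Psi_def)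

lemma return_integral_le_measure:
  assumes "B \<in> sets M" "0 \<le> \<sigma>" "\<sigma> \<le> 1"
  shows "return_integral \<sigma> n B \<le> measure M B"
proof -
  have "return_integral \<sigma> n B \<le> (\<integral>x. indicator B ((U ^^ n) x) \<partial>M)"
    unfolding return_integral_def
    by (intro integral_mono integrable_return integrable_indicator_funpow assms)
       (use assms in \<open>auto simp: indicator_def power_le_one\<close>)
  also have "\<dots> = measure M B"
    by (rule integral_indicator_funpow[OF assms(1)])
  finally show ?thesis .
qed

lemma funpow_diff_in_return_into:
  assumes "x \<in> space M" "p \<in> P" "r p = Suc i" "i \<le> n"
    and "(U ^^ n) x \<in> D i p" "(U ^^ Suc n) x \<in> B"
  shows "(U ^^ (n - i)) x \<in> return_into i B"
proof -
  define w where "w = (U ^^ (n - i)) x"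
  have "(U ^^ i) w = (U ^^ (i + (n - i))) x"
    by (simp add: w_def funpow_add)
  then have "(U ^^ i) w = (U ^^ n) x"
    using assms(4) by simp
  moreover have "w \<in> space M"
    using funpow_in_space[OF assms(1)] by (simp add: w_def)
  moreover have "valid_piece P r i p"
    using assms(2,3) by (simp add: valid_piece_def)
  ultimately have "w \<in> D 0 p"
    using in_piece_if_funpow_in_piece[of w 0 i p] assms(5) by simp
  then have "w \<in> base"
    unfolding tower_level_def by (rule UN_I[rotated]) (use assms(2) height_pos in simp)
  have "(U ^^ n) x \<in> tops {p \<in> P. r p = Suc i}"
    unfolding tops_def by (rule UN_I[of p]) (use assms(2,3,5) in simp_all)
  then show ?thesis
    unfolding return_into_def w_def[symmetric]
    using \<open>w \<in> base\<close> \<open>w \<in> space M\<close> \<open>(U ^^ i) w = (U ^^ n) x\<close> assms(6) by simp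
qed

text \<open>Decomposition of an orbit at its last return to the base before time \<open>Suc n\<close>, say at
  time \<open>n - i\<close>, after which it climbs a column of height \<open>Suc i\<close>; the second summand covers
  orbits that never return and are still climbing their column.\<close>
lemma last_return_le:
  fixes \<sigma> :: real
  assumes "0 \<le> \<sigma>" "\<sigma> \<le> 1" "B \<subseteq> base" "x \<in> space M"
  shows "indicator B ((U ^^ Suc n) x) * \<sigma> ^ Psi U base (Suc n) x
    \<le> (\<Sum>i\<le>n. \<sigma> * (indicator (return_into i B) ((U ^^ (n - i)) x) * \<sigma> ^ Psi U base (n - i) x))
      + \<sigma> * indicator (tops {p \<in> P. Suc n < r p} \<inter> U -` B) ((U ^^ n) x)"
    (is "?lhs \<le> ?sum + ?tail")
proof -
  have "0 \<le> ?sum"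
    using assms(1) by (auto intro: sum_nonneg)
  have "0 \<le> ?tail"
    using assms(1) by simp
  show ?thesis
  proof (cases "(U ^^ Suc n) x \<in> B")
    case False
    then show ?thesis
      using \<open>0 \<le> ?sum\<close> \<open>0 \<le> ?tail\<close> by simp
  next
    case True
    then have lhs: "?lhs = \<sigma> ^ Psi U base (Suc n) x"
      by simp
    define y where "y = (U ^^ n) x"
    have "U y \<in> B"
      using True by (simp add: y_def)
    moreover have "y \<in> space M"
      using funpow_in_space[OF assms(4)] by (simp add: y_def)
    ultimately obtain p where p: "p \<in> P" "y \<in> D (r p - 1) p"
      using top_if_image_in_base assms(3) by blast
    have "(U ^^ Suc n) x \<in> base"
      using True assms(3) by blast
    show ?thesis
    proof (cases "Suc n < r p")
      case True
      then have "y \<in> tops {p \<in> P. Suc n < r p} \<inter> U -` B"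
        using p \<open>U y \<in> B\<close> unfolding tops_def by blast
      then have tail: "?tail = \<sigma>"
        by (simp add: y_def)
      have "1 \<le> Psi U base (Suc n) x"
        using Suc_Psi_le_Psi[of 0 "Suc n" U x base] \<open>(U ^^ Suc n) x \<in> base\<close> by simp
      then have "\<sigma> ^ Psi U base (Suc n) x \<le> \<sigma> ^ 1"
        using assms(1,2) by (rule power_decreasing)
      then show ?thesis
        unfolding lhs tail using \<open>0 \<le> ?sum\<close> by simp
    next
      case False
      define i where "i = r p - 1"
      have "i \<le> n" "r p = Suc i"
        using False height_pos[OF p(1)] by (auto simp: i_def)
      have "(U ^^ (n - i)) x \<in> return_into i B"
        using funpow_diff_in_return_into[OF assms(4) p(1) \<open>r p = Suc i\<close> \<open>i \<le> n\<close>] p(2) True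
        by (simp add: i_def y_def)
      have "\<sigma> ^ Psi U base (Suc n) x \<le> \<sigma> ^ Suc (Psi U base (n - i) x)"
        using Suc_Psi_le_Psi[of "n - i" "Suc n" U x base] \<open>(U ^^ Suc n) x \<in> base\<close> assms(1,2)
        by (intro power_decreasing) auto
      also have "\<dots> = \<sigma> * (indicator (return_into i B) ((U ^^ (n - i)) x) * \<sigma> ^ Psi U base (n - i) x)"
        using \<open>(U ^^ (n - i)) x \<in> return_into i B\<close> by simp
      also have "\<dots> \<le> ?sum"
        using \<open>i \<le> n\<close> assms(1)
        by (intro member_le_sum[where f = "\<lambda>i. \<sigma> * (indicator (return_into i B) ((U ^^ (n - i)) x)
          * \<sigma> ^ Psi U base (n - i) x)"]) simp_all
      finally show ?thesis
        using lhs \<open>0 \<le> ?tail\<close> by linarith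
    qed
  qed
qed

lemma return_integral_Suc_le:
  assumes "0 \<le> \<sigma>" "\<sigma> \<le> 1" "B \<in> sets M" "B \<subseteq> base"
  shows "return_integral \<sigma> (Suc n) B
    \<le> (\<Sum>i\<le>n. \<sigma> * return_integral \<sigma> (n - i) (return_into i B))
      + \<sigma> * measure M (tops {p \<in> P. Suc n < r p} \<inter> U -` B)"
proof -
  let ?T = "tops {p \<in> P. Suc n < r p} \<inter> U -` B"
  let ?f = "\<lambda>i x. indicator (return_into i B) ((U ^^ (n - i)) x) * \<sigma> ^ Psi U base (n - i) x"
  have "?T \<in> sets M"
    by (rule sets_tops_Int_preimage[OF _ assms(3)]) auto
  have int_f: "integrable M (?f i)" for i
    using integrable_return[OF sets_return_into[OF assms(3)] assms(1,2)] .
  have int_T: "integrable M (\<lambda>x. indicator ?T ((U ^^ n) x) :: real)"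
    using integrable_indicator_funpow[OF \<open>?T \<in> sets M\<close>] .
  have "return_integral \<sigma> (Suc n) B
      \<le> (\<integral>x. (\<Sum>i\<le>n. \<sigma> * ?f i x) + \<sigma> * indicator ?T ((U ^^ n) x) \<partial>M)"
    unfolding return_integral_def
    using assms last_return_le int_f int_T
    by (intro integral_mono integrable_return) auto
  also have "\<dots> = (\<Sum>i\<le>n. \<sigma> * (\<integral>x. ?f i x \<partial>M)) + \<sigma> * (\<integral>x. indicator ?T ((U ^^ n) x) \<partial>M)"
    using int_f int_T by simp
  also have "\<dots> = (\<Sum>i\<le>n. \<sigma> * return_integral \<sigma> (n - i) (return_into i B)) + \<sigma> * measure M ?T"
    using integral_indicator_funpow[OF \<open>?T \<in> sets M\<close>] by (simp add: return_integral_def)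
  finally show ?thesis .
qed

lemma measure_tail_Int_preimage_le:
  assumes "B \<in> sets M" "B \<subseteq> base" "0 < measure M base"
  shows "measure M (tops {p \<in> P. n < r p} \<inter> U -` B)
    \<le> (1 + Cd)\<^sup>2 / measure M base * measure M B * measure M (tower_level P r D n)"
  using measure_tops_Int_preimage_le[OF _ assms, of "{p \<in> P. n < r p}"]
  by (simp add: measure_tops_tail)

lemma return_integral_Suc_le_convolution:
  assumes \<sigma>: "0 \<le> \<sigma>" "\<sigma> \<le> 1" and B: "B \<in> sets M" "B \<subseteq> base"
    and "0 < measure M base" "0 \<le> a"
    and tail: "\<And>k. measure M (tower_level P r D k) \<le> C * \<rho> ^ k"
    and IH: "\<And>i B'. i \<le> m \<Longrightarrow> B' \<in> sets M \<Longrightarrow> B' \<subseteq> base \<Longrightarrow>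
      return_integral \<sigma> (m - i) B' \<le> a ^ (m - i) * measure M B'"
  shows "return_integral \<sigma> (Suc m) B
    \<le> \<sigma> * ((1 + Cd)\<^sup>2 / measure M base) * C * measure M B * ((\<Sum>i\<le>m. a ^ (m - i) * \<rho> ^ i) + \<rho> ^ Suc m)"
proof -
  define K where "K = (1 + Cd)\<^sup>2 / measure M base * measure M B"
  have "0 \<le> K"
    using \<open>0 < measure M base\<close> by (simp add: K_def)
  have return_le: "return_integral \<sigma> (m - i) (return_into i B) \<le> a ^ (m - i) * (K * (C * \<rho> ^ i))"
    if "i \<le> m" for i
  proof -
    have "return_integral \<sigma> (m - i) (return_into i B) \<le> a ^ (m - i) * measure M (return_into i B)"
      using that B by (intro IH sets_return_into return_into_subset_base)
    also have "\<dots> \<le> a ^ (m - i) * (K * measure M (tower_level P r D i))"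
      using measure_return_into_le[OF B \<open>0 < measure M base\<close>] \<open>0 \<le> a\<close>
      by (intro mult_left_mono) (simp_all add: K_def)
    also have "\<dots> \<le> a ^ (m - i) * (K * (C * \<rho> ^ i))"
      using tail \<open>0 \<le> K\<close> \<open>0 \<le> a\<close> by (intro mult_left_mono) auto
    finally show ?thesis .
  qed
  have tail_le: "measure M (tops {p \<in> P. Suc m < r p} \<inter> U -` B) \<le> K * (C * \<rho> ^ Suc m)"
    using measure_tail_Int_preimage_le[OF B \<open>0 < measure M base\<close>, of "Suc m"]
      mult_left_mono[OF tail[of "Suc m"] \<open>0 \<le> K\<close>]
    by (simp add: K_def)
  have "return_integral \<sigma> (Suc m) B
      \<le> (\<Sum>i\<le>m. \<sigma> * return_integral \<sigma> (m - i) (return_into i B))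
        + \<sigma> * measure M (tops {p \<in> P. Suc m < r p} \<inter> U -` B)"
    by (rule return_integral_Suc_le[OF \<sigma> B])
  also have "\<dots> \<le> (\<Sum>i\<le>m. \<sigma> * (a ^ (m - i) * (K * (C * \<rho> ^ i)))) + \<sigma> * (K * (C * \<rho> ^ Suc m))"
    using \<sigma>(1) return_le tail_le by (intro add_mono sum_mono mult_left_mono) auto
  also have "\<dots> = \<sigma> * K * C * ((\<Sum>i\<le>m. a ^ (m - i) * \<rho> ^ i) + \<rho> ^ Suc m)"
    by (simp add: sum_distrib_left algebra_simps)
  finally show ?thesis
    by (simp add: K_def mult.assoc mult.left_commute)
qed

lemma return_integral_le_geometric:
  assumes \<sigma>: "0 \<le> \<sigma>" "\<sigma> \<le> 1" and \<rho>: "0 \<le> \<rho>" "\<rho> < a" and "0 < measure M base"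
    and tail: "\<And>k. measure M (tower_level P r D k) \<le> C * \<rho> ^ k"
    and small: "\<sigma> * ((1 + Cd)\<^sup>2 / measure M base) * C * (1 / (a - \<rho>) + 1) \<le> 1"
  shows "B \<in> sets M \<Longrightarrow> B \<subseteq> base \<Longrightarrow> return_integral \<sigma> n B \<le> a ^ n * measure M B"
proof (induction n arbitrary: B rule: less_induct)
  case (less n)
  show ?case
  proof (cases n)
    case 0
    then show ?thesis
      using return_integral_0[OF less.prems(1)] by simp
  next
    case (Suc m)
    define c where "c = \<sigma> * ((1 + Cd)\<^sup>2 / measure M base) * C"
    have "0 \<le> c"
      using \<sigma> \<open>0 < measure M base\<close> order_trans[OF measure_nonneg tail[of 0]] by (simp add: c_def)
    have "return_integral \<sigma> n B \<le> c * measure M B * ((\<Sum>i\<le>m. a ^ (m - i) * \<rho> ^ i) + \<rho> ^ Suc m)"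
      unfolding Suc c_def
      using \<sigma> less.prems \<open>0 < measure M base\<close> \<rho> tail less.IH Suc
      by (intro return_integral_Suc_le_convolution) auto
    also have "\<dots> \<le> c * measure M B * (a ^ Suc m / (a - \<rho>) + a ^ Suc m)"
      using \<open>0 \<le> c\<close> \<rho> by (intro mult_left_mono add_mono sum_power_convolution_le power_mono) auto
    also have "\<dots> = a ^ n * measure M B * (c * (1 / (a - \<rho>) + 1))"
      unfolding Suc by (simp add: algebra_simps)
    also have "\<dots> \<le> a ^ n * measure M B"
      using small \<rho> by (intro mult_left_le) (auto simp: c_def)
    finally show ?thesis .
  qed
qed

lemma small_weight_return_decay:
  assumes "0 \<le> \<rho>" "\<rho> < 1" "0 < measure M base"
    and tail: "\<And>k. measure M (tower_level P r D k) \<le> C * \<rho> ^ k"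
  obtains a \<sigma>\<^sub>0 where "0 < a" "a < 1" "0 < \<sigma>\<^sub>0" "\<sigma>\<^sub>0 \<le> 1"
    "\<And>\<sigma> n. 0 \<le> \<sigma> \<Longrightarrow> \<sigma> \<le> \<sigma>\<^sub>0 \<Longrightarrow> return_integral \<sigma> n base \<le> a ^ n"
proof
  define a where "a = (1 + \<rho>) / 2"
  define Q where "Q = (1 + Cd)\<^sup>2 / measure M base * C * (1 / (a - \<rho>) + 1)"
  show "0 < a" "a < 1"
    using assms by (auto simp: a_def)
  have "0 \<le> C"
    using order_trans[OF measure_nonneg tail[of 0]] by simp
  then have "0 \<le> Q"
    using assms by (simp add: Q_def a_def)
  show "0 < 1 / (1 + Q)"
    using \<open>0 \<le> Q\<close> by simp
  show "1 / (1 + Q) \<le> 1"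
    using \<open>0 \<le> Q\<close> by simp
  fix \<sigma> n assume "0 \<le> \<sigma>" "\<sigma> \<le> 1 / (1 + Q)"
  then have "\<sigma> + \<sigma> * Q \<le> 1"
    using \<open>0 \<le> Q\<close> by (simp add: le_divide_eq distrib_left)
  then have "\<sigma> * Q \<le> 1"
    using \<open>0 \<le> \<sigma>\<close> by linarith
  then have "\<sigma> * ((1 + Cd)\<^sup>2 / measure M base) * C * (1 / (a - \<rho>) + 1) \<le> 1"
    by (simp add: Q_def mult.assoc)
  moreover have "\<sigma> \<le> 1"
    using \<open>\<sigma> \<le> 1 / (1 + Q)\<close> \<open>1 / (1 + Q) \<le> 1\<close> by linarith
  ultimately have "return_integral \<sigma> n base \<le> a ^ n * measure M base"
    using \<open>0 \<le> \<sigma>\<close> assms \<open>a < 1\<close>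
    by (intro return_integral_le_geometric[where \<rho> = \<rho> and C = C]) (auto simp: a_def)
  also have "\<dots> \<le> a ^ n"
    using \<open>0 < a\<close> by (intro mult_left_le) auto
  finally show "return_integral \<sigma> n base \<le> a ^ n" .
qed

lemma return_integral_power_le:
  assumes "B \<in> sets M" "0 \<le> \<theta>" "\<theta> \<le> 1" "1 \<le> L"
  shows "return_integral (\<theta> ^ m) n B \<le> \<theta> ^ n + L ^ n * return_integral ((1 / L) ^ m) n B"
proof -
  have "0 \<le> (1 / L) ^ m" "(1 / L) ^ m \<le> 1" "0 \<le> \<theta> ^ m" "\<theta> ^ m \<le> 1"
    using assms by (simp_all add: power_le_one)
  note integrable = integrable_return[OF assms(1) this(1,2)] integrable_return[OF assms(1) this(3,4)]
  have "return_integral (\<theta> ^ m) n B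
      \<le> (\<integral>x. \<theta> ^ n + L ^ n * (indicator B ((U ^^ n) x) * ((1 / L) ^ m) ^ Psi U base n x) \<partial>M)"
    unfolding return_integral_def
  proof (rule integral_mono)
    fix x
    show "indicator B ((U ^^ n) x) * (\<theta> ^ m) ^ Psi U base n x
        \<le> \<theta> ^ n + L ^ n * (indicator B ((U ^^ n) x) * ((1 / L) ^ m) ^ Psi U base n x)"
    proof (cases "(U ^^ n) x \<in> B")
      case True
      then show ?thesis
        using power_le_threshold_split[OF assms(2-4), of m "Psi U base n x" n]
        by (simp add: power_mult)
    qed (use assms(2) in simp)
  qed (use integrable in auto)
  also have "\<dots> = \<theta> ^ n + L ^ n * return_integral ((1 / L) ^ m) n B"
    using integrable by (simp add: return_integral_def prob_space)
  finally show ?thesis .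
qed

lemma return_integral_decay:
  assumes "0 \<le> \<rho>" "\<rho> < 1" "\<And>k. measure M (tower_level P r D k) \<le> C * \<rho> ^ k"
    and "0 \<le> \<tau>" "\<tau> < 1"
  shows "\<exists>C' \<theta>. 0 < C' \<and> 0 < \<theta> \<and> \<theta> < 1 \<and> (\<forall>n. return_integral \<tau> n base \<le> C' * \<theta> ^ n)"
proof (cases "measure M base = 0")
  case True
  then have "return_integral \<tau> n base \<le> 1 * (1 / 2) ^ n" for n
    using return_integral_le_measure[of base \<tau> n] assms(4,5)
    by (simp add: order_trans[OF _ zero_le_power])
  then show ?thesis
    by (intro exI[of _ 1] exI[of _ "1 / 2"]) auto
next
  case False
  then have "0 < measure M base"
    using measure_nonneg[of M base] by linarith
  then obtain a \<sigma>\<^sub>0 where a: "0 < a" "a < 1" and "0 < \<sigma>\<^sub>0" "\<sigma>\<^sub>0 \<le> 1"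
    and small: "\<And>\<sigma> n. 0 \<le> \<sigma> \<Longrightarrow> \<sigma> \<le> \<sigma>\<^sub>0 \<Longrightarrow> return_integral \<sigma> n base \<le> a ^ n"
    using small_weight_return_decay assms(1-3) by metis
  define L where "L = 2 / (1 + a)"
  have "1 < L" "0 < L * a" "L * a < 1"
    using a by (auto simp: L_def field_simps)
  obtain m where m: "(1 / L) ^ m < \<sigma>\<^sub>0"
    using real_arch_pow_inv[OF \<open>0 < \<sigma>\<^sub>0\<close>, of "1 / L"] \<open>1 < L\<close> by auto
  then have "0 < m"
    using \<open>\<sigma>\<^sub>0 \<le> 1\<close> by (cases m) auto
  define \<theta>\<^sub>1 where "\<theta>\<^sub>1 = root m \<tau>"
  have \<theta>\<^sub>1: "0 \<le> \<theta>\<^sub>1" "\<theta>\<^sub>1 < 1" "\<theta>\<^sub>1 ^ m = \<tau>"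
    using \<open>0 < m\<close> assms(4,5) by (simp_all add: \<theta>\<^sub>1_def)
  define \<theta> where "\<theta> = max \<theta>\<^sub>1 (L * a)"
  have "return_integral \<tau> n base \<le> 2 * \<theta> ^ n" for n
  proof -
    have "return_integral \<tau> n base \<le> \<theta>\<^sub>1 ^ n + L ^ n * return_integral ((1 / L) ^ m) n base"
      using return_integral_power_le[of base \<theta>\<^sub>1 L m n] \<theta>\<^sub>1 \<open>1 < L\<close> by simp
    also have "\<dots> \<le> \<theta>\<^sub>1 ^ n + L ^ n * a ^ n"
      using small[of "(1 / L) ^ m" n] m \<open>1 < L\<close> by (intro add_left_mono mult_left_mono) auto
    also have "\<dots> \<le> \<theta> ^ n + \<theta> ^ n"
      unfolding power_mult_distrib[symmetric] \<theta>_def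
      using \<theta>\<^sub>1 \<open>0 < L * a\<close> by (intro add_mono power_mono) auto
    finally show ?thesis
      by simp
  qed
  moreover have "0 < \<theta>" "\<theta> < 1"
    using \<theta>\<^sub>1 \<open>0 < L * a\<close> \<open>L * a < 1\<close> by (auto simp: \<theta>_def)
  ultimately show ?thesis
    by (intro exI[of _ 2] exI[of _ \<theta>]) auto
qed

end

theorem lemmaA2:
  fixes M :: "'a measure" and U :: "'a \<Rightarrow> 'a" and P :: "nat set" and r :: "nat \<Rightarrow> nat"
    and D :: "nat \<Rightarrow> nat \<Rightarrow> 'a set" and J :: "'a \<Rightarrow> real" and Cd \<beta> \<rho> \<tau> :: real
  assumes tower: "expanding_young_tower M U P r D J Cd \<beta>"
    and rho: "0 \<le> \<rho>" "\<rho> < 1"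
    and tail: "(\<lambda>n. measure M (tower_level P r D n)) \<in> O(\<lambda>n. \<rho> ^ n)"
    and tau: "0 \<le> \<tau>" "\<tau> < 1"
  shows "\<exists>C \<theta>. 0 < C \<and> 0 < \<theta> \<and> \<theta> < 1 \<and>
    (\<forall>n. set_lebesgue_integral M ((U ^^ n) -` tower_level P r D 0 \<inter> space M)
            (\<lambda>x. \<tau> ^ Psi U (tower_level P r D 0) n x) \<le> C * \<theta> ^ n)"
proof -
  interpret young_tower M U P r D J Cd
    using tower by (rule expanding_young_tower_imp_young_tower)
  define \<rho>' where "\<rho>' = max \<rho> (1 / 2)"
  have "0 < \<rho>'" "\<rho>' < 1"
    using rho by (auto simp: \<rho>'_def)
  have "(\<lambda>n. \<rho> ^ n) \<in> O(\<lambda>n. \<rho>' ^ n)"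
    using rho by (intro landau_o.big_mono always_eventually) (auto simp: \<rho>'_def intro!: power_mono)
  then obtain C where "\<And>k. measure M (tower_level P r D k) \<le> C * \<rho>' ^ k"
    using bigo_power_imp_le[OF landau_o.big_trans[OF tail] \<open>0 < \<rho>'\<close>] by blast
  then show ?thesis
    unfolding set_integral_eq_return_integral
    using return_integral_decay[of \<rho>' C \<tau>] \<open>0 < \<rho>'\<close> \<open>\<rho>' < 1\<close> tau by auto
qed

end
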